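(* Let $(\mathcal{C},\Sigma)$ be an $n$-angulated category, $(\mathcal{A},\Sigma)$ a complete $n$-angulated subcategory, and $C$ an object of $\mathcal{C}$. If there exists an object $A$ of $\mathcal{A}$ such that $C\oplus A$ lies in $\mathcal{A}$, then $C$ lies in $\mathcal{A}$.
   Context: All categories are small. Fix an integer $n\ge 3$. Let $\mathcal{C}$ be an additive category with an automorphism $\Sigma$. An $n$-$\Sigma$-sequence in $\mathcal{C}$ is a diagram $A_1\xrightarrow{\alpha_1}A_2\xrightarrow{\alpha_2}\cdots\xrightarrow{\alpha_{n-1}}A_n\xrightarrow{\alpha_n}\Sigma A_1$. Its left rotation is $A_2\xrightarrow{\alpha_2}\cdots\xrightarrow{\alpha_n}\Sigma A_1\xrightarrow{(-1)^n\Sigma\alpha_1}\Sigma A_2$. A morphism from $(A_\bullet,\alpha)$ to $(B_\bullet,\beta)$ is a tuple $(\varphi_1,\dots,\varphi_n)$, $\varphi_i:A_i\to B_i$, with $\beta_i\varphi_i=\varphi_{i+1}\alpha_i$ for $1\le i\le n-1$ and $\beta_n\varphi_n=(\Sigma\varphi_1)\alpha_n$; it is an isomorphism if all $\varphi_i$ are isomorphisms. Direct sums of sequences are taken termwise. $(\mathcal{C},\Sigma)$ is $n$-angulated if it is equipped with a collection $\mathscr N$ of $n$-$\Sigma$-sequences, called $n$-angles, such that: (N1)(a) $\mathscr N$ is closed under direct sums, direct summands and isomorphisms of $n$-$\Sigma$-sequences; (b) for every object $A$, the trivial sequence $A\xrightarrow{1}A\to0\to\cdots\to0\to\Sigma A$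 is in $\mathscr N$; (c) every morphism $A_1\to A_2$ is the first morphism of some $n$-angle; (N2) an $n$-$\Sigma$-sequence is in $\mathscr N$ iff its left rotation is; (N3) given $n$-angles $(A_\bullet,\alpha),(B_\bullet,\beta)$ and $\varphi_1:A_1\to B_1$, $\varphi_2:A_2\to B_2$ with $\beta_1\varphi_1=\varphi_2\alpha_1$, there exist $\varphi_3,\dots,\varphi_n$ making $(\varphi_1,\dots,\varphi_n)$ a morphism; (N4) in (N3) the $\varphi_i$ can be chosen so that the mapping cone $A_2\oplus B_1\to A_3\oplus B_2\to\cdots\to\Sigma A_1\oplus B_n\to\Sigma A_2\oplus\Sigma B_1$, with maps $\left[\begin{smallmatrix}-\alpha_{i+1}&0\\ \varphi_{i+1}&\beta_i\end{smallmatrix}\right]$ ($1\le i\le n-1$) and last map $\left[\begin{smallmatrix}-\Sigma\alpha_1&0\\ \Sigma\varphi_1&\beta_n\end{smallmatrix}\right]$, is an $n$-angle. An additive functor $L:\mathcal{C}\to\mathcal{C}'$ between $n$-angulated categories $(\mathcal{C},\Sigma)$, $(\mathcal{C}',\Sigma')$ is $n$-angulated if there is a natural isomorphism $\eta:L\circ\Sigma\to\Sigma'\circ L$ such that for every $n$-angle $(A_\bullet,\alpha)$ in $\mathcal{C}$, $L A_1\xrightarrow{L\alpha_1}\cdots\xrightarrow{L\alpha_{n-1}}LA_n\xrightarrow{\eta\circ L\alpha_n}\Sigma'LA_1$ is an $n$-angle in $\mathcal{C}'$. An $n$-angulated subcategory of $(\mathcal{C},\Sigma)$ is a full subcategory $\mathcal{A}$,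 closed under isomorphisms, on which $\Sigma$ restricts to an automorphism, equipped with $n$-angles making $(\mathcal{A},\Sigma)$ an $n$-angulated category, such that the inclusion $\mathcal{A}\to\mathcal{C}$ is an $n$-angulated functor. A subcategory $\mathcal{A}$ is complete if whenever $A_1\to A_2\to\cdots\to A_n\to\Sigma A_1$ is an $n$-angle in $\mathcal{C}$ in which $n-1$ of the objects $A_1,\dots,A_n$ lie in $\mathcal{A}$, the remaining one also lies in $\mathcal{A}$. *)

theory Defs
  imports Main
begin

record ('o,'m) addcat =
  Ob  :: "'o set"
  Ar  :: "'m set"
  dom :: "'m \<Rightarrow> 'o"
  cod :: "'m \<Rightarrow> 'o"
  cmp :: "'m \<Rightarrow> 'm \<Rightarrow> 'm"   (* cmp C g f = g o f *)
  idt :: "'o \<Rightarrow> 'm"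
  pls :: "'m \<Rightarrow> 'm \<Rightarrow> 'm"
  zro :: "'o \<Rightarrow> 'o \<Rightarrow> 'm"
  ngt :: "'m \<Rightarrow> 'm"

definition hom :: "('o,'m,'x) addcat_scheme \<Rightarrow> 'o \<Rightarrow> 'o \<Rightarrow> 'm set" where
  "hom C a b = {f \<in> Ar C. dom C f = a \<and> cod C f = b}"

definition category :: "('o,'m,'x) addcat_scheme \<Rightarrow> bool" where
  "category C \<longleftrightarrow>
     (\<forall>f\<in>Ar C. dom C f \<in> Ob C \<and> cod C f \<in> Ob C) \<and>
     (\<forall>a\<in>Ob C. idt C a \<in> hom C a a) \<and>
     (\<forall>f\<in>Ar C. \<forall>g\<in>Ar C. cod C f = dom C g \<longrightarrow> cmp C g f \<in> hom C (dom C f) (cod C g)) \<and>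
     (\<forall>f\<in>Ar C. cmp C f (idt C (dom C f)) = f \<and> cmp C (idt C (cod C f)) f = f) \<and>
     (\<forall>f\<in>Ar C. \<forall>g\<in>Ar C. \<forall>h\<in>Ar C. cod C f = dom C g \<and> cod C g = dom C h \<longrightarrow>
         cmp C h (cmp C g f) = cmp C (cmp C h g) f)"

definition preadditive :: "('o,'m,'x) addcat_scheme \<Rightarrow> bool" where
  "preadditive C \<longleftrightarrow> category C \<and>
     (\<forall>a\<in>Ob C. \<forall>b\<in>Ob C.
        zro C a b \<in> hom C a b \<and>
        (\<forall>f\<in>hom C a b. \<forall>g\<in>hom C a b. pls C f g \<in> hom C a b \<and> pls C f g = pls C g f) \<and>
        (\<forall>f\<in>hom C a b. \<forall>g\<in>hom C a b. \<forall>h\<in>hom C a b. pls C (pls C f g) h = pls C f (pls C g h)) \<and>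
        (\<forall>f\<in>hom C a b. pls C f (zro C a b) = f \<and> ngt C f \<in> hom C a b \<and> pls C f (ngt C f) = zro C a b)) \<and>
     (\<forall>a\<in>Ob C. \<forall>b\<in>Ob C. \<forall>c\<in>Ob C.
        (\<forall>f\<in>hom C a b. \<forall>g\<in>hom C b c. \<forall>g'\<in>hom C b c.
            cmp C (pls C g g') f = pls C (cmp C g f) (cmp C g' f)) \<and>
        (\<forall>f\<in>hom C a b. \<forall>f'\<in>hom C a b. \<forall>g\<in>hom C b c.
            cmp C g (pls C f f') = pls C (cmp C g f) (cmp C g f')))"

definition is_zero_obj :: "('o,'m,'x) addcat_scheme \<Rightarrow> 'o \<Rightarrow> bool" where
  "is_zero_obj C z \<longleftrightarrow> z \<in> Ob C \<and>
     (\<forall>b\<in>Ob C. (\<exists>!f. f \<in> hom C z b) \<and> (\<exists>!f. f \<in> hom C b z))"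

definition biprod :: "('o,'m,'x) addcat_scheme \<Rightarrow> 'o \<Rightarrow> 'o \<Rightarrow> 'o \<Rightarrow> 'm \<Rightarrow> 'm \<Rightarrow> 'm \<Rightarrow> 'm \<Rightarrow> bool" where
  "biprod C a b s i1 i2 p1 p2 \<longleftrightarrow>
     a \<in> Ob C \<and> b \<in> Ob C \<and> s \<in> Ob C \<and>
     i1 \<in> hom C a s \<and> i2 \<in> hom C b s \<and> p1 \<in> hom C s a \<and> p2 \<in> hom C s b \<and>
     cmp C p1 i1 = idt C a \<and> cmp C p2 i2 = idt C b \<and>
     cmp C p1 i2 = zro C b a \<and> cmp C p2 i1 = zro C a b \<and>
     pls C (cmp C i1 p1) (cmp C i2 p2) = idt C s"

definition additive :: "('o,'m,'x) addcat_scheme \<Rightarrow> bool" where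
  "additive C \<longleftrightarrow> preadditive C \<and> (\<exists>z. is_zero_obj C z) \<and>
     (\<forall>a\<in>Ob C. \<forall>b\<in>Ob C. \<exists>s i1 i2 p1 p2. biprod C a b s i1 i2 p1 p2)"

definition iso :: "('o,'m,'x) addcat_scheme \<Rightarrow> 'm \<Rightarrow> bool" where
  "iso C h \<longleftrightarrow> h \<in> Ar C \<and>
     (\<exists>h'\<in>hom C (cod C h) (dom C h). cmp C h' h = idt C (dom C h) \<and> cmp C h h' = idt C (cod C h))"

definition "functor" :: "('o,'m,'x) addcat_scheme \<Rightarrow> ('p,'n,'y) addcat_scheme \<Rightarrow>
     ('o \<Rightarrow> 'p) \<Rightarrow> ('m \<Rightarrow> 'n) \<Rightarrow> bool" where
  "functor C D Fo Fm \<longleftrightarrow>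
     (\<forall>a\<in>Ob C. Fo a \<in> Ob D \<and> Fm (idt C a) = idt D (Fo a)) \<and>
     (\<forall>f\<in>Ar C. Fm f \<in> hom D (Fo (dom C f)) (Fo (cod C f))) \<and>
     (\<forall>f\<in>Ar C. \<forall>g\<in>Ar C. cod C f = dom C g \<longrightarrow> Fm (cmp C g f) = cmp D (Fm g) (Fm f))"

definition additive_functor :: "('o,'m,'x) addcat_scheme \<Rightarrow> ('p,'n,'y) addcat_scheme \<Rightarrow>
     ('o \<Rightarrow> 'p) \<Rightarrow> ('m \<Rightarrow> 'n) \<Rightarrow> bool" where
  "additive_functor C D Fo Fm \<longleftrightarrow> functor C D Fo Fm \<and>
     (\<forall>a\<in>Ob C. \<forall>b\<in>Ob C. \<forall>f\<in>hom C a b. \<forall>g\<in>hom C a b. Fm (pls C f g) = pls D (Fm f) (Fm g))"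

definition automorphism :: "('o,'m,'x) addcat_scheme \<Rightarrow> ('o \<Rightarrow> 'o) \<Rightarrow> ('m \<Rightarrow> 'm) \<Rightarrow> bool" where
  "automorphism C So Sm \<longleftrightarrow> functor C C So Sm \<and>
     bij_betw So (Ob C) (Ob C) \<and> bij_betw Sm (Ar C) (Ar C)"

section \<open>n-Sigma-sequences, indexed by 1..n\<close>

type_synonym ('o,'m) nseq = "(nat \<Rightarrow> 'o) \<times> (nat \<Rightarrow> 'm)"

definition is_nseq :: "('o,'m,'x) addcat_scheme \<Rightarrow> nat \<Rightarrow> ('o \<Rightarrow> 'o) \<Rightarrow> ('o,'m) nseq \<Rightarrow> bool" where
  "is_nseq C n So x \<longleftrightarrow>
     (\<forall>i\<in>{1..n}. fst x i \<in> Ob C) \<and>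
     (\<forall>i\<in>{1..<n}. snd x i \<in> hom C (fst x i) (fst x (Suc i))) \<and>
     snd x n \<in> hom C (fst x n) (So (fst x 1))"

definition sgnpow :: "('o,'m,'x) addcat_scheme \<Rightarrow> nat \<Rightarrow> 'm \<Rightarrow> 'm" where
  "sgnpow C k g = (if even k then g else ngt C g)"

definition rotL :: "('o,'m,'x) addcat_scheme \<Rightarrow> nat \<Rightarrow> ('o \<Rightarrow> 'o) \<Rightarrow> ('m \<Rightarrow> 'm) \<Rightarrow>
     ('o,'m) nseq \<Rightarrow> ('o,'m) nseq" where
  "rotL C n So Sm x =
     ((\<lambda>i. if i < n then fst x (Suc i) else So (fst x 1)),
      (\<lambda>i. if i < n then snd x (Suc i) else sgnpow C n (Sm (snd x 1))))"

definition seqmor :: "('o,'m,'x) addcat_scheme \<Rightarrow> nat \<Rightarrow> ('m \<Rightarrow> 'm) \<Rightarrow>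
     ('o,'m) nseq \<Rightarrow> ('o,'m) nseq \<Rightarrow> (nat \<Rightarrow> 'm) \<Rightarrow> bool" where
  "seqmor C n Sm x y \<phi> \<longleftrightarrow>
     (\<forall>i\<in>{1..n}. \<phi> i \<in> hom C (fst x i) (fst y i)) \<and>
     (\<forall>i\<in>{1..<n}. cmp C (snd y i) (\<phi> i) = cmp C (\<phi> (Suc i)) (snd x i)) \<and>
     cmp C (snd y n) (\<phi> n) = cmp C (Sm (\<phi> 1)) (snd x n)"

definition seqiso :: "('o,'m,'x) addcat_scheme \<Rightarrow> nat \<Rightarrow> ('m \<Rightarrow> 'm) \<Rightarrow>
     ('o,'m) nseq \<Rightarrow> ('o,'m) nseq \<Rightarrow> (nat \<Rightarrow> 'm) \<Rightarrow> bool" where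
  "seqiso C n Sm x y \<phi> \<longleftrightarrow> seqmor C n Sm x y \<phi> \<and> (\<forall>i\<in>{1..n}. iso C (\<phi> i))"

definition is_dsum :: "('o,'m,'x) addcat_scheme \<Rightarrow> nat \<Rightarrow> ('m \<Rightarrow> 'm) \<Rightarrow>
     ('o,'m) nseq \<Rightarrow> ('o,'m) nseq \<Rightarrow> ('o,'m) nseq \<Rightarrow> bool" where
  "is_dsum C n Sm x y s \<longleftrightarrow>
     (\<exists>i1 i2 p1 p2.
        (\<forall>k\<in>{1..n}. biprod C (fst x k) (fst y k) (fst s k) (i1 k) (i2 k) (p1 k) (p2 k)) \<and>
        (\<forall>k\<in>{1..<n}. snd s k =
            pls C (cmp C (i1 (Suc k)) (cmp C (snd x k) (p1 k)))
                  (cmp C (i2 (Suc k)) (cmp C (snd y k) (p2 k)))) \<and>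
        snd s n =
            pls C (cmp C (Sm (i1 1)) (cmp C (snd x n) (p1 n)))
                  (cmp C (Sm (i2 1)) (cmp C (snd y n) (p2 n))))"

text \<open>Trivial sequence A -1-> A -> 0 -> ... -> 0 -> Sigma A, for a zero object z.\<close>
definition trivseq :: "('o,'m,'x) addcat_scheme \<Rightarrow> nat \<Rightarrow> ('o \<Rightarrow> 'o) \<Rightarrow> 'o \<Rightarrow> 'o \<Rightarrow> ('o,'m) nseq" where
  "trivseq C n So z a =
     ((\<lambda>i. if i \<le> 2 then a else z),
      (\<lambda>i. if i = 1 then idt C a
           else if i < n then zro C (if i \<le> 2 then a else z) z
           else zro C z (So a)))"

text \<open>Mapping cone of (phi_1..phi_n): x -> y, with objects A_(i+1) (+) B_i.\<close>
definition is_cone :: "('o,'m,'x) addcat_scheme \<Rightarrow> nat \<Rightarrow> ('o \<Rightarrow> 'o) \<Rightarrow> ('m \<Rightarrow> 'm) \<Rightarrow>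
     ('o,'m) nseq \<Rightarrow> ('o,'m) nseq \<Rightarrow> (nat \<Rightarrow> 'm) \<Rightarrow> ('o,'m) nseq \<Rightarrow> bool" where
  "is_cone C n So Sm x y \<phi> c \<longleftrightarrow>
     (\<exists>i1 i2 p1 p2.
        (\<forall>k\<in>{1..n}. biprod C (if k < n then fst x (Suc k) else So (fst x 1)) (fst y k)
                        (fst c k) (i1 k) (i2 k) (p1 k) (p2 k)) \<and>
        (\<forall>k\<in>{1..<n}. snd c k =
            pls C (cmp C (i1 (Suc k)) (cmp C (ngt C (snd x (Suc k))) (p1 k)))
             (pls C (cmp C (i2 (Suc k)) (cmp C (\<phi> (Suc k)) (p1 k)))
                    (cmp C (i2 (Suc k)) (cmp C (snd y k) (p2 k))))) \<and>
        snd c n =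
            pls C (cmp C (Sm (i1 1)) (cmp C (ngt C (Sm (snd x 1))) (p1 n)))
             (pls C (cmp C (Sm (i2 1)) (cmp C (Sm (\<phi> 1)) (p1 n)))
                    (cmp C (Sm (i2 1)) (cmp C (snd y n) (p2 n)))))"

definition n_angulated :: "('o,'m,'x) addcat_scheme \<Rightarrow> nat \<Rightarrow> ('o \<Rightarrow> 'o) \<Rightarrow> ('m \<Rightarrow> 'm) \<Rightarrow>
     ('o,'m) nseq set \<Rightarrow> bool" where
  "n_angulated C n So Sm N \<longleftrightarrow>
     additive C \<and> automorphism C So Sm \<and>
     (\<forall>x\<in>N. is_nseq C n So x) \<and>
     \<comment> \<open>(N1a) closed under direct sums, direct summands and isomorphisms\<close>
     (\<forall>x y s. is_nseq C n So x \<and> is_nseq C n So y \<and> is_nseq C n So s \<and> is_dsum C n Sm x y s \<longrightarrow>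
         (s \<in> N \<longleftrightarrow> x \<in> N \<and> y \<in> N)) \<and>
     (\<forall>x y \<phi>. x \<in> N \<and> is_nseq C n So y \<and> seqiso C n Sm x y \<phi> \<longrightarrow> y \<in> N) \<and>
     \<comment> \<open>(N1b) trivial n-angles\<close>
     (\<forall>a\<in>Ob C. \<forall>z. is_zero_obj C z \<longrightarrow> trivseq C n So z a \<in> N) \<and>
     \<comment> \<open>(N1c)\<close>
     (\<forall>f\<in>Ar C. \<exists>x\<in>N. snd x 1 = f) \<and>
     \<comment> \<open>(N2)\<close>
     (\<forall>x. is_nseq C n So x \<longrightarrow> (x \<in> N \<longleftrightarrow> rotL C n So Sm x \<in> N)) \<and>
     \<comment> \<open>(N3)\<close>
     (\<forall>x\<in>N. \<forall>y\<in>N. \<forall>\<phi>1 \<phi>2.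
         \<phi>1 \<in> hom C (fst x 1) (fst y 1) \<and> \<phi>2 \<in> hom C (fst x 2) (fst y 2) \<and>
         cmp C (snd y 1) \<phi>1 = cmp C \<phi>2 (snd x 1) \<longrightarrow>
         (\<exists>\<phi>. \<phi> 1 = \<phi>1 \<and> \<phi> 2 = \<phi>2 \<and> seqmor C n Sm x y \<phi>)) \<and>
     \<comment> \<open>(N4)\<close>
     (\<forall>x\<in>N. \<forall>y\<in>N. \<forall>\<phi>1 \<phi>2.
         \<phi>1 \<in> hom C (fst x 1) (fst y 1) \<and> \<phi>2 \<in> hom C (fst x 2) (fst y 2) \<and>
         cmp C (snd y 1) \<phi>1 = cmp C \<phi>2 (snd x 1) \<longrightarrow>
         (\<exists>\<phi>. \<phi> 1 = \<phi>1 \<and> \<phi> 2 = \<phi>2 \<and> seqmor C n Sm x y \<phi> \<and>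
              (\<exists>c. is_cone C n So Sm x y \<phi> c \<and> c \<in> N)))"

definition nang_functor :: "('o,'m,'x) addcat_scheme \<Rightarrow> ('p,'n,'y) addcat_scheme \<Rightarrow> nat \<Rightarrow>
     ('o \<Rightarrow> 'o) \<Rightarrow> ('m \<Rightarrow> 'm) \<Rightarrow> ('p \<Rightarrow> 'p) \<Rightarrow> ('n \<Rightarrow> 'n) \<Rightarrow>
     ('o,'m) nseq set \<Rightarrow> ('p,'n) nseq set \<Rightarrow> ('o \<Rightarrow> 'p) \<Rightarrow> ('m \<Rightarrow> 'n) \<Rightarrow> bool" where
  "nang_functor C D n So Sm So' Sm' N N' Lo Lm \<longleftrightarrow>
     additive_functor C D Lo Lm \<and>
     (\<exists>\<eta>. (\<forall>a\<in>Ob C. \<eta> a \<in> hom D (Lo (So a)) (So' (Lo a)) \<and> iso D (\<eta> a)) \<and>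
          (\<forall>f\<in>Ar C. cmp D (\<eta> (cod C f)) (Lm (Sm f)) = cmp D (Sm' (Lm f)) (\<eta> (dom C f))) \<and>
          (\<forall>x\<in>N. (Lo \<circ> fst x,
                   (\<lambda>i. if i = n then cmp D (\<eta> (fst x 1)) (Lm (snd x n)) else Lm (snd x i))) \<in> N'))"

definition full_sub :: "('o,'m,'x) addcat_scheme \<Rightarrow> 'o set \<Rightarrow> ('o,'m,'x) addcat_scheme" where
  "full_sub C A = C\<lparr>Ob := A, Ar := {f \<in> Ar C. dom C f \<in> A \<and> cod C f \<in> A}\<rparr>"

definition nang_subcat :: "('o,'m,'x) addcat_scheme \<Rightarrow> nat \<Rightarrow> ('o \<Rightarrow> 'o) \<Rightarrow> ('m \<Rightarrow> 'm) \<Rightarrow>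
     ('o,'m) nseq set \<Rightarrow> 'o set \<Rightarrow> ('o,'m) nseq set \<Rightarrow> bool" where
  "nang_subcat C n So Sm N A NA \<longleftrightarrow>
     A \<subseteq> Ob C \<and>
     (\<forall>a\<in>A. \<forall>b\<in>Ob C. (\<exists>f\<in>hom C a b. iso C f) \<longrightarrow> b \<in> A) \<and>
     So ` A = A \<and>
     n_angulated (full_sub C A) n So Sm NA \<and>
     nang_functor (full_sub C A) C n So Sm So Sm NA N id id"

definition complete_subcat :: "('o,'m,'x) addcat_scheme \<Rightarrow> nat \<Rightarrow> ('o,'m) nseq set \<Rightarrow> 'o set \<Rightarrow> bool" where
  "complete_subcat C n N A \<longleftrightarrow>
     (\<forall>x\<in>N. \<forall>j\<in>{1..n}. (\<forall>i\<in>{1..n} - {j}. fst x i \<in> A) \<longrightarrow> fst x j \<in> A)"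

end

theory Submission
  imports Defs
begin

text \<open>Let \<open>z\<close> be a zero object of \<open>\<C>\<close>; it lies in \<open>\<A>\<close>, being isomorphic to the zero object
  of \<open>\<A>\<close>, and \<open>w = \<Sigma>\<^sup>-\<^sup>1 z\<close> is again a zero object. The sequence
  \<open>w \<rightarrow> c \<rightarrow> c \<rightarrow> z \<rightarrow> \<dots> \<rightarrow> z \<rightarrow> \<Sigma>w\<close>, whose middle map is the identity, rotates to the
  trivial \<open>n\<close>-angle of \<open>c\<close> and is therefore an \<open>n\<close>-angle. Its direct sum with the trivial
  \<open>n\<close>-angle of \<open>a\<close> is an \<open>n\<close>-angle with objects \<open>a, c \<oplus> a, c, z, \<dots>, z\<close>, all of which except
  \<open>c\<close> lie in \<open>\<A>\<close>; completeness of \<open>\<A>\<close> forces \<open>c \<in> \<A>\<close>.\<close>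

lemma hom_objects: "category C \<Longrightarrow> f \<in> hom C a b \<Longrightarrow> a \<in> Ob C \<and> b \<in> Ob C"
  unfolding category_def hom_def by auto

lemma cmp_hom: "category C \<Longrightarrow> f \<in> hom C a b \<Longrightarrow> g \<in> hom C b c \<Longrightarrow> cmp C g f \<in> hom C a c"
  unfolding category_def hom_def by auto

lemma idt_hom: "category C \<Longrightarrow> a \<in> Ob C \<Longrightarrow> idt C a \<in> hom C a a"
  unfolding category_def by auto

lemma cmp_idt_left: "category C \<Longrightarrow> f \<in> hom C a b \<Longrightarrow> cmp C (idt C b) f = f"
  unfolding category_def hom_def by auto

lemma cmp_idt_right: "category C \<Longrightarrow> f \<in> hom C a b \<Longrightarrow> cmp C f (idt C a) = f"
  unfolding category_def hom_def by auto

lemma iso_idt: "category C \<Longrightarrow> a \<in> Ob C \<Longrightarrow> iso C (idt C a)"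
  using idt_hom cmp_idt_left unfolding iso_def hom_def by fastforce

lemma preadditive_category: "preadditive C \<Longrightarrow> category C"
  unfolding preadditive_def by simp

lemma preadditive_hom_group:
  assumes "preadditive C" "a \<in> Ob C" "b \<in> Ob C"
  shows "zro C a b \<in> hom C a b \<and>
        (\<forall>f\<in>hom C a b. \<forall>g\<in>hom C a b. pls C f g \<in> hom C a b \<and> pls C f g = pls C g f) \<and>
        (\<forall>f\<in>hom C a b. \<forall>g\<in>hom C a b. \<forall>h\<in>hom C a b. pls C (pls C f g) h = pls C f (pls C g h)) \<and>
        (\<forall>f\<in>hom C a b. pls C f (zro C a b) = f \<and> ngt C f \<in> hom C a b \<and> pls C f (ngt C f) = zro C a b)"
  using assms(2,3) conjunct1[OF conjunct2[OF assms(1)[unfolded preadditive_def]]] by blast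

lemma zro_hom: "preadditive C \<Longrightarrow> a \<in> Ob C \<Longrightarrow> b \<in> Ob C \<Longrightarrow> zro C a b \<in> hom C a b"
  by (meson preadditive_hom_group)

lemma pls_hom: "preadditive C \<Longrightarrow> f \<in> hom C a b \<Longrightarrow> g \<in> hom C a b \<Longrightarrow> pls C f g \<in> hom C a b"
  by (meson preadditive_hom_group preadditive_category hom_objects)

lemma pls_commute: "preadditive C \<Longrightarrow> f \<in> hom C a b \<Longrightarrow> g \<in> hom C a b \<Longrightarrow> pls C f g = pls C g f"
  by (meson preadditive_hom_group preadditive_category hom_objects)

lemma pls_assoc: "preadditive C \<Longrightarrow> f \<in> hom C a b \<Longrightarrow> g \<in> hom C a b \<Longrightarrow> h \<in> hom C a b \<Longrightarrow>
   pls C (pls C f g) h = pls C f (pls C g h)"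
  by (meson preadditive_hom_group preadditive_category hom_objects)

lemma pls_zro: "preadditive C \<Longrightarrow> f \<in> hom C a b \<Longrightarrow> pls C f (zro C a b) = f"
  by (meson preadditive_hom_group preadditive_category hom_objects)

lemma ngt_hom: "preadditive C \<Longrightarrow> f \<in> hom C a b \<Longrightarrow> ngt C f \<in> hom C a b"
  by (meson preadditive_hom_group preadditive_category hom_objects)

lemma pls_ngt: "preadditive C \<Longrightarrow> f \<in> hom C a b \<Longrightarrow> pls C f (ngt C f) = zro C a b"
  by (meson preadditive_hom_group preadditive_category hom_objects)

lemma cmp_pls_right:
  assumes "preadditive C" "f \<in> hom C a b" "f' \<in> hom C a b" "g \<in> hom C b c"
  shows "cmp C g (pls C f f') = pls C (cmp C g f) (cmp C g f')"
proof -
  have "a \<in> Ob C" "b \<in> Ob C" "c \<in> Ob C"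
    using hom_objects[OF preadditive_category[OF assms(1)]] assms(2,4) by blast+
  then show ?thesis
    using assms(2-4) conjunct2[OF conjunct2[OF assms(1)[unfolded preadditive_def]]] by blast
qed

lemma pls_idem_eq_zro:
  assumes P: "preadditive C" and g: "g \<in> hom C a b" and idem: "pls C g g = g"
  shows "g = zro C a b"
proof -
  have "g = pls C g (pls C g (ngt C g))" using pls_zro[OF P g] pls_ngt[OF P g] by simp
  also have "\<dots> = pls C (pls C g g) (ngt C g)" using pls_assoc[OF P g g ngt_hom[OF P g]] by simp
  also have "\<dots> = zro C a b" using idem pls_ngt[OF P g] by simp
  finally show ?thesis .
qed

lemma zero_obj_hom_from_eq:
  "category C \<Longrightarrow> is_zero_obj C z \<Longrightarrow> f \<in> hom C z b \<Longrightarrow> g \<in> hom C z b \<Longrightarrow> f = g"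
  using hom_objects unfolding is_zero_obj_def by metis

lemma zero_obj_hom_to_eq:
  "category C \<Longrightarrow> is_zero_obj C z \<Longrightarrow> f \<in> hom C b z \<Longrightarrow> g \<in> hom C b z \<Longrightarrow> f = g"
  using hom_objects unfolding is_zero_obj_def by metis

lemma cmp_through_zero_obj:
  assumes P: "preadditive C" and Z: "is_zero_obj C z" and f: "f \<in> hom C a z" and g: "g \<in> hom C z b"
  shows "cmp C g f = zro C a b"
proof -
  have K: "category C" using preadditive_category[OF P] .
  have "pls C f f = f" using zero_obj_hom_to_eq[OF K Z pls_hom[OF P f f] f] .
  then have "pls C (cmp C g f) (cmp C g f) = cmp C g f" using cmp_pls_right[OF P f f g] by simp
  then show ?thesis using pls_idem_eq_zro[OF P cmp_hom[OF K f g]] by simp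
qed

lemma biprod_zero_obj_right:
  assumes P: "preadditive C" and Z: "is_zero_obj C z" and b: "b \<in> Ob C"
  shows "biprod C b z b (idt C b) (zro C z b) (idt C b) (zro C b z)"
proof -
  have K: "category C" using preadditive_category[OF P] .
  have z: "z \<in> Ob C" using Z unfolding is_zero_obj_def by blast
  have h: "idt C b \<in> hom C b b" "zro C z b \<in> hom C z b" "zro C b z \<in> hom C b z"
    using idt_hom[OF K b] zro_hom[OF P z b] zro_hom[OF P b z] .
  have "cmp C (zro C b z) (zro C z b) = idt C z"
    using zero_obj_hom_from_eq[OF K Z cmp_hom[OF K h(2,3)] idt_hom[OF K z]] .
  moreover have "cmp C (zro C z b) (zro C b z) = zro C b b" using cmp_through_zero_obj[OF P Z h(3,2)] .
  ultimately show ?thesis unfolding biprod_def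
    using b z h cmp_idt_left[OF K h(1)] cmp_idt_left[OF K h(2)] cmp_idt_right[OF K h(3)]
      pls_zro[OF P h(1)] by simp
qed

lemma biprod_zero_obj_left:
  assumes P: "preadditive C" and Z: "is_zero_obj C z" and b: "b \<in> Ob C"
  shows "biprod C z b b (zro C z b) (idt C b) (zro C b z) (idt C b)"
proof -
  have K: "category C" using preadditive_category[OF P] .
  have z: "z \<in> Ob C" using Z unfolding is_zero_obj_def by blast
  have "pls C (cmp C (zro C z b) (zro C b z)) (cmp C (idt C b) (idt C b)) = idt C b"
    using cmp_through_zero_obj[OF P Z zro_hom[OF P b z] zro_hom[OF P z b]]
      cmp_idt_left[OF K idt_hom[OF K b]] pls_commute[OF P zro_hom[OF P b b] idt_hom[OF K b]]
      pls_zro[OF P idt_hom[OF K b]] by simp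
  with biprod_zero_obj_right[OF assms] show ?thesis unfolding biprod_def by simp
qed

lemma iso_zro_to_zero_obj:
  assumes P: "preadditive C" and Z: "is_zero_obj C z" and a: "a \<in> Ob C"
    and endo: "\<exists>!f. f \<in> hom C a a"
  shows "iso C (zro C a z)"
proof -
  have K: "category C" using preadditive_category[OF P] .
  have z: "z \<in> Ob C" using Z unfolding is_zero_obj_def by blast
  have f: "zro C a z \<in> hom C a z" and g: "zro C z a \<in> hom C z a"
    using zro_hom[OF P a z] zro_hom[OF P z a] .
  have "cmp C (zro C z a) (zro C a z) = idt C a"
    using endo cmp_hom[OF K f g] idt_hom[OF K a] by blast
  moreover have "cmp C (zro C a z) (zro C z a) = idt C z"
    using zero_obj_hom_from_eq[OF K Z cmp_hom[OF K g f] idt_hom[OF K z]] .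
  ultimately show ?thesis using f g unfolding iso_def hom_def by auto
qed

lemma zero_obj_of_functor_image:
  assumes P: "preadditive C" and F: "functor C C So Sm" and inj: "inj_on Sm (Ar C)"
    and w: "w \<in> Ob C" and Z: "is_zero_obj C (So w)"
  shows "is_zero_obj C w"
proof -
  have K: "category C" using preadditive_category[OF P] .
  have Sm_hom: "Sm f \<in> hom C (So a) (So b)" if "f \<in> hom C a b" for f a b
    using F that unfolding functor_def hom_def by auto
  have "f = g" if "f \<in> hom C w b" "g \<in> hom C w b" for f g b
    using zero_obj_hom_from_eq[OF K Z Sm_hom[OF that(1)] Sm_hom[OF that(2)]] inj that
    unfolding inj_on_def hom_def by blast
  moreover have "f = g" if "f \<in> hom C b w" "g \<in> hom C b w" for f g b
    using zero_obj_hom_to_eq[OF K Z Sm_hom[OF that(1)] Sm_hom[OF that(2)]] inj that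
    unfolding inj_on_def hom_def by blast
  ultimately show ?thesis unfolding is_zero_obj_def using w zro_hom[OF P] by metis
qed

lemma n_angulated_additive: "n_angulated C n So Sm N \<Longrightarrow> additive C"
  unfolding n_angulated_def by simp

lemma n_angulated_automorphism: "n_angulated C n So Sm N \<Longrightarrow> automorphism C So Sm"
  unfolding n_angulated_def by simp

lemma n_angle_is_nseq: "n_angulated C n So Sm N \<Longrightarrow> x \<in> N \<Longrightarrow> is_nseq C n So x"
  unfolding n_angulated_def by simp

lemma n_angle_dsum:
  "n_angulated C n So Sm N \<Longrightarrow> is_nseq C n So s \<Longrightarrow> is_dsum C n Sm x y s \<Longrightarrow> x \<in> N \<Longrightarrow> y \<in> N
   \<Longrightarrow> s \<in> N"
  unfolding n_angulated_def by blast

lemma n_angle_seqiso: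
  "n_angulated C n So Sm N \<Longrightarrow> x \<in> N \<Longrightarrow> is_nseq C n So y \<Longrightarrow> seqiso C n Sm x y \<phi> \<Longrightarrow> y \<in> N"
  unfolding n_angulated_def by blast

lemma n_angle_trivseq:
  "n_angulated C n So Sm N \<Longrightarrow> a \<in> Ob C \<Longrightarrow> is_zero_obj C z \<Longrightarrow> trivseq C n So z a \<in> N"
  unfolding n_angulated_def by blast

lemma n_angle_of_rotL:
  "n_angulated C n So Sm N \<Longrightarrow> is_nseq C n So x \<Longrightarrow> rotL C n So Sm x \<in> N \<Longrightarrow> x \<in> N"
  unfolding n_angulated_def by blast

lemma hom_full_sub: "a \<in> A \<Longrightarrow> b \<in> A \<Longrightarrow> hom (full_sub C A) a b = hom C a b"
  unfolding hom_def full_sub_def by auto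

lemma nang_subcat_zero_obj:
  assumes P: "preadditive C" and Sub: "nang_subcat C n So Sm N A NA" and Z: "is_zero_obj C z"
  shows "z \<in> A"
proof -
  have AO: "A \<subseteq> Ob C"
    and iso_closed: "\<forall>a\<in>A. \<forall>b\<in>Ob C. (\<exists>f\<in>hom C a b. iso C f) \<longrightarrow> b \<in> A"
    and "n_angulated (full_sub C A) n So Sm NA"
    using Sub unfolding nang_subcat_def by blast+
  then obtain za where za: "is_zero_obj (full_sub C A) za"
    using n_angulated_additive unfolding additive_def by blast
  have zaA: "za \<in> A" using za unfolding is_zero_obj_def full_sub_def by simp
  have "Ob (full_sub C A) = A" unfolding full_sub_def by simp
  then have "\<exists>!f. f \<in> hom (full_sub C A) za za" using za zaA unfolding is_zero_obj_def by blast
  then have "\<exists>!f. f \<in> hom C za za" using hom_full_sub[OF zaA zaA, of C] by simp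
  then have "iso C (zro C za z)" using iso_zro_to_zero_obj[OF P Z] zaA AO by blast
  moreover have "zro C za z \<in> hom C za z" and "z \<in> Ob C"
    using zro_hom[OF P] zaA AO Z unfolding is_zero_obj_def by blast+
  ultimately show ?thesis using iso_closed zaA by blast
qed

lemma is_nseq_cong:
  assumes x: "is_nseq C n So x" and agree: "\<forall>i\<in>{1..n}. fst y i = fst x i \<and> snd y i = snd x i"
    and n: "n \<ge> 1"
  shows "is_nseq C n So y"
proof -
  have "1 \<in> {1..n}" "n \<in> {1..n}" "\<forall>i\<in>{1..<n}. i \<in> {1..n} \<and> Suc i \<in> {1..n}" using n by auto
  then show ?thesis using x agree unfolding is_nseq_def by simp
qed

lemma seqiso_idt_cong:
  assumes K: "category C" and F: "functor C C So Sm" and x: "is_nseq C n So x"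
    and agree: "\<forall>i\<in>{1..n}. fst y i = fst x i \<and> snd y i = snd x i" and n: "n \<ge> 1"
  shows "seqiso C n Sm x y (\<lambda>i. idt C (fst x i))"
proof -
  have ob: "\<forall>i\<in>{1..n}. fst x i \<in> Ob C" using x unfolding is_nseq_def by blast
  have "\<forall>i\<in>{1..n}. idt C (fst x i) \<in> hom C (fst x i) (fst y i) \<and> iso C (idt C (fst x i))"
    using ob agree idt_hom[OF K] iso_idt[OF K] by simp
  moreover have "\<forall>i\<in>{1..<n}. cmp C (snd y i) (idt C (fst x i)) = cmp C (idt C (fst x (Suc i))) (snd x i)"
    using x agree cmp_idt_left[OF K] cmp_idt_right[OF K] unfolding is_nseq_def by auto
  moreover have "cmp C (snd y n) (idt C (fst x n)) = cmp C (Sm (idt C (fst x 1))) (snd x n)"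
  proof -
    have "Sm (idt C (fst x 1)) = idt C (So (fst x 1))" using F ob n unfolding functor_def by simp
    then show ?thesis
      using x agree n cmp_idt_left[OF K] cmp_idt_right[OF K] unfolding is_nseq_def by auto
  qed
  ultimately show ?thesis unfolding seqiso_def seqmor_def by blast
qed

lemma n_angle_cong:
  assumes NA: "n_angulated C n So Sm N" and x: "x \<in> N"
    and agree: "\<forall>i\<in>{1..n}. fst y i = fst x i \<and> snd y i = snd x i" and n: "n \<ge> 1"
  shows "y \<in> N"
proof -
  have K: "category C" and F: "functor C C So Sm"
    using n_angulated_additive[OF NA] n_angulated_automorphism[OF NA] preadditive_category
    unfolding additive_def automorphism_def by blast+
  have "is_nseq C n So x" using n_angle_is_nseq[OF NA x] .
  then show ?thesis
    using n_angle_seqiso[OF NA x] is_nseq_cong seqiso_idt_cong[OF K F] agree n by blast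
qed

definition dsum_seq :: "('o,'m,'x) addcat_scheme \<Rightarrow> nat \<Rightarrow> ('m \<Rightarrow> 'm) \<Rightarrow>
     ('o,'m) nseq \<Rightarrow> ('o,'m) nseq \<Rightarrow> (nat \<Rightarrow> 'o) \<Rightarrow>
     (nat \<Rightarrow> 'm) \<Rightarrow> (nat \<Rightarrow> 'm) \<Rightarrow> (nat \<Rightarrow> 'm) \<Rightarrow> (nat \<Rightarrow> 'm) \<Rightarrow> ('o,'m) nseq" where
  "dsum_seq C n Sm x y X I1 I2 P1 P2 =
     (X, \<lambda>k. if k < n then
              pls C (cmp C (I1 (Suc k)) (cmp C (snd x k) (P1 k)))
                    (cmp C (I2 (Suc k)) (cmp C (snd y k) (P2 k)))
            else pls C (cmp C (Sm (I1 1)) (cmp C (snd x n) (P1 n)))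
                    (cmp C (Sm (I2 1)) (cmp C (snd y n) (P2 n))))"

lemma is_dsum_dsum_seq:
  assumes "\<forall>k\<in>{1..n}. biprod C (fst x k) (fst y k) (X k) (I1 k) (I2 k) (P1 k) (P2 k)"
  shows "is_dsum C n Sm x y (dsum_seq C n Sm x y X I1 I2 P1 P2)"
  unfolding is_dsum_def dsum_seq_def using assms by auto

lemma is_nseq_dsum_seq:
  assumes P: "preadditive C" and F: "functor C C So Sm"
    and x: "is_nseq C n So x" and y: "is_nseq C n So y" and n: "n \<ge> 1"
    and B: "\<forall>k\<in>{1..n}. biprod C (fst x k) (fst y k) (X k) (I1 k) (I2 k) (P1 k) (P2 k)"
  shows "is_nseq C n So (dsum_seq C n Sm x y X I1 I2 P1 P2)"
proof -
  have K: "category C" using preadditive_category[OF P] .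
  have "\<forall>k\<in>{1..n}. X k \<in> Ob C" using B unfolding biprod_def by blast
  moreover have "pls C (cmp C (I1 (Suc k)) (cmp C (snd x k) (P1 k)))
                    (cmp C (I2 (Suc k)) (cmp C (snd y k) (P2 k))) \<in> hom C (X k) (X (Suc k))"
    if k: "k \<in> {1..<n}" for k
  proof -
    have "k \<in> {1..n}" "Suc k \<in> {1..n}" using k by auto
    then show ?thesis
      using B x y k pls_hom[OF P] cmp_hom[OF K] unfolding is_nseq_def biprod_def by meson
  qed
  moreover have "pls C (cmp C (Sm (I1 1)) (cmp C (snd x n) (P1 n)))
                    (cmp C (Sm (I2 1)) (cmp C (snd y n) (P2 n))) \<in> hom C (X n) (So (X 1))"
  proof -
    have ends: "1 \<in> {1..n}" "n \<in> {1..n}" using n by auto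
    have "Sm (I1 1) \<in> hom C (So (fst x 1)) (So (X 1))" "Sm (I2 1) \<in> hom C (So (fst y 1)) (So (X 1))"
      using F B ends unfolding functor_def biprod_def hom_def by auto
    then show ?thesis
      using B x y ends pls_hom[OF P] cmp_hom[OF K] unfolding is_nseq_def biprod_def by meson
  qed
  ultimately show ?thesis unfolding is_nseq_def dsum_seq_def by simp
qed

lemma n_angle_termwise_biprod:
  assumes NA: "n_angulated C n So Sm N" and x: "x \<in> N" and y: "y \<in> N" and n: "n \<ge> 1"
    and B: "\<forall>k\<in>{1..n}. \<exists>i1 i2 p1 p2. biprod C (fst x k) (fst y k) (X k) i1 i2 p1 p2"
  shows "\<exists>s\<in>N. fst s = X"
proof -
  obtain I1 I2 P1 P2
    where B': "\<forall>k\<in>{1..n}. biprod C (fst x k) (fst y k) (X k) (I1 k) (I2 k) (P1 k) (P2 k)"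
    using B by metis
  have P: "preadditive C" and F: "functor C C So Sm"
    using n_angulated_additive[OF NA] n_angulated_automorphism[OF NA]
    unfolding additive_def automorphism_def by blast+
  have "dsum_seq C n Sm x y X I1 I2 P1 P2 \<in> N"
    using n_angle_dsum[OF NA _ is_dsum_dsum_seq[OF B'] x y]
      is_nseq_dsum_seq[OF P F n_angle_is_nseq[OF NA x] n_angle_is_nseq[OF NA y] n B'] .
  moreover have "fst (dsum_seq C n Sm x y X I1 I2 P1 P2) = X" unfolding dsum_seq_def by simp
  ultimately show ?thesis by blast
qed

text \<open>The preimage of \<open>trivseq C n So z c\<close> under left rotation, provided \<open>So w = z\<close>.\<close>

definition rot_trivseq :: "('o,'m,'x) addcat_scheme \<Rightarrow> nat \<Rightarrow> ('o \<Rightarrow> 'o) \<Rightarrow> 'o \<Rightarrow> 'o \<Rightarrow> 'o \<Rightarrow>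
     ('o,'m) nseq" where
  "rot_trivseq C n So z w c =
     ((\<lambda>i. if i = 1 then w else if i \<le> 3 then c else z),
      (\<lambda>i. if i = 1 then zro C w c else if i = 2 then idt C c
           else zro C (if i = 3 then c else z) (if i < n then z else So w)))"

lemma rot_trivseq_n_angle:
  assumes NA: "n_angulated C n So Sm N" and n: "n \<ge> 3" and c: "c \<in> Ob C"
    and Z: "is_zero_obj C z" and w: "w \<in> Ob C" and Sw: "So w = z"
  shows "rot_trivseq C n So z w c \<in> N"
proof -
  have P: "preadditive C" and F: "functor C C So Sm"
    using n_angulated_additive[OF NA] n_angulated_automorphism[OF NA]
    unfolding additive_def automorphism_def by blast+
  have K: "category C" using preadditive_category[OF P] .
  have z: "z \<in> Ob C" using Z unfolding is_zero_obj_def by blast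
  have Sc: "So c \<in> Ob C" using F c unfolding functor_def by blast
  have seq: "is_nseq C n So (rot_trivseq C n So z w c)"
    unfolding is_nseq_def rot_trivseq_def
    using n c w z Sw zro_hom[OF P] idt_hom[OF K c] by auto
  have "Sm (zro C w c) \<in> hom C z (So c)"
    using F zro_hom[OF P w c] Sw unfolding functor_def hom_def by auto
  then have "Sm (zro C w c) = zro C z (So c)" "ngt C (Sm (zro C w c)) = zro C z (So c)"
    using zero_obj_hom_from_eq[OF K Z _ zro_hom[OF P z Sc]] ngt_hom[OF P] by blast+
  then have "sgnpow C n (Sm (zro C w c)) = zro C z (So c)" unfolding sgnpow_def by simp
  then have "\<forall>i\<in>{1..n}. fst (rotL C n So Sm (rot_trivseq C n So z w c)) i = fst (trivseq C n So z c) i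
      \<and> snd (rotL C n So Sm (rot_trivseq C n So z w c)) i = snd (trivseq C n So z c) i"
    using n Sw unfolding rotL_def rot_trivseq_def trivseq_def by auto
  then have "rotL C n So Sm (rot_trivseq C n So z w c) \<in> N"
    using n_angle_cong[OF NA n_angle_trivseq[OF NA c Z]] n by simp
  then show ?thesis using n_angle_of_rotL[OF NA seq] by blast
qed

lemma rot_trivseq_trivseq_biprods:
  assumes P: "preadditive C" and Z: "is_zero_obj C z" and W: "is_zero_obj C w"
    and bp: "biprod C c a s i1 i2 p1 p2"
  shows "\<forall>k\<in>{1..n}. \<exists>j1 j2 q1 q2. biprod C (fst (rot_trivseq C n So z w c) k) (fst (trivseq C n So z a) k)
           (if k = 1 then a else if k = 2 then s else if k = 3 then c else z) j1 j2 q1 q2"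
proof
  fix k :: nat assume "k \<in> {1..n}"
  moreover have a: "a \<in> Ob C" and c: "c \<in> Ob C" and z: "z \<in> Ob C"
    using bp Z unfolding biprod_def is_zero_obj_def by blast+
  ultimately consider "k = 1" | "k = 2" | "k = 3" | "k > 3" by fastforce
  then show "\<exists>j1 j2 q1 q2. biprod C (fst (rot_trivseq C n So z w c) k) (fst (trivseq C n So z a) k)
           (if k = 1 then a else if k = 2 then s else if k = 3 then c else z) j1 j2 q1 q2"
  proof cases
    case 1
    then show ?thesis using biprod_zero_obj_left[OF P W a] unfolding rot_trivseq_def trivseq_def by auto
  next
    case 2
    then show ?thesis using bp unfolding rot_trivseq_def trivseq_def by auto
  next
    case 3
    then show ?thesis using biprod_zero_obj_right[OF P Z c] unfolding rot_trivseq_def trivseq_def by auto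
  next
    case 4
    then show ?thesis using biprod_zero_obj_right[OF P Z z] unfolding rot_trivseq_def trivseq_def by auto
  qed
qed

theorem lemma4p3:
  fixes C :: "('o,'m) addcat" and n :: nat
    and So :: "'o \<Rightarrow> 'o" and Sm :: "'m \<Rightarrow> 'm"
    and N :: "('o,'m) nseq set" and A :: "'o set" and NA :: "('o,'m) nseq set"
  assumes "n \<ge> 3"
    and "n_angulated C n So Sm N"
    and "nang_subcat C n So Sm N A NA"
    and "complete_subcat C n N A"
    and "c \<in> Ob C"
    and "a \<in> A"
    and "biprod C c a s i1 i2 p1 p2"
    and "s \<in> A"
  shows "c \<in> A"
proof -
  note n = assms(1) and NA = assms(2) and Sub = assms(3) and bp = assms(7)
  have P: "preadditive C" and F: "functor C C So Sm"
    and bij: "bij_betw So (Ob C) (Ob C)" "bij_betw Sm (Ar C) (Ar C)"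
    using n_angulated_additive[OF NA] n_angulated_automorphism[OF NA]
    unfolding additive_def automorphism_def by blast+
  obtain z where Z: "is_zero_obj C z" using n_angulated_additive[OF NA] unfolding additive_def by blast
  have zA: "z \<in> A" using nang_subcat_zero_obj[OF P Sub Z] .
  have "z \<in> So ` Ob C" using bij_betw_imp_surj_on[OF bij(1)] Z unfolding is_zero_obj_def by blast
  then obtain w where w: "w \<in> Ob C" and Sw: "So w = z" by blast
  have W: "is_zero_obj C w"
    using zero_obj_of_functor_image[OF P F bij_betw_imp_inj_on[OF bij(2)] w] Z Sw by simp
  have "a \<in> Ob C" using Sub assms(6) unfolding nang_subcat_def by blast
  moreover have "n \<ge> 1" using n by simp
  ultimately obtain x where "x \<in> N" and
    x: "fst x = (\<lambda>k. if k = 1 then a else if k = 2 then s else if k = 3 then c else z)"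
    using n_angle_termwise_biprod[OF NA rot_trivseq_n_angle[OF NA n assms(5) Z w Sw]
        n_angle_trivseq[OF NA _ Z] _ rot_trivseq_trivseq_biprods[OF P Z W bp]]
    by blast
  moreover have "\<forall>i\<in>{1..n} - {3}. fst x i \<in> A" using x assms(6,8) zA by auto
  moreover have "(3::nat) \<in> {1..n}" using n by simp
  ultimately have "fst x 3 \<in> A" using assms(4) unfolding complete_subcat_def by blast
  then show ?thesis using x by simp
qed

end
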